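(* Let $\beta>0$ and let $p=\lfloor\beta\rfloor$. Then $\Phi_\beta(p,0)=1$ and $\Phi_\beta(p+1,0)<1$.
   Context: For $\beta>0$, $W_\beta$ is the random walk on $\mathbb{Z}^2$ starting at the origin which, independently at each step, moves from $(a,b)$ to $(a+1,b)$ with probability $1/(\beta+1)$ and to $(a,b+1)$ with probability $\beta/(\beta+1)$. For a nonnegative integer $q$, $\Phi_\beta(q,0)$ is the probability that $W_\beta$ visits at least one of the lattice points $(n,qn+1)$, $n\ge 0$ (i.e. crosses the line $y=qx$). *)

theory Defs
  imports "HOL-Probability.Probability"
begin

text \<open>The walk W_beta is driven by an i.i.d. sequence of steps: a step is True
  (move from (a,b) to (a,b+1)) with probability beta/(beta+1) and False
  (move from (a,b) to (a+1,b)) with probability 1/(beta+1).\<close>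

definition walk_space :: "real \<Rightarrow> bool stream measure" where
  "walk_space \<beta> = stream_space (measure_pmf (bernoulli_pmf (\<beta> / (\<beta> + 1))))"

definition walk_pos :: "bool stream \<Rightarrow> nat \<Rightarrow> int \<times> int" where
  "walk_pos \<omega> k = (int (length (filter Not (stake k \<omega>))),
                    int (length (filter id (stake k \<omega>))))"

text \<open>Phi_beta(q,0): probability that the walk visits some point (n, q n + 1), n >= 0.\<close>
definition Phi :: "real \<Rightarrow> nat \<Rightarrow> real" where
  "Phi \<beta> q = measure (walk_space \<beta>)
     {\<omega> \<in> space (walk_space \<beta>). \<exists>k n::nat. walk_pos \<omega> k = (int n, int q * int n + 1)}"

end

theory Submission
  imports Defs
begin

text \<open>
  Write \<open>pp = \<beta>/(\<beta>+1)\<close> for the probability of an upward step. The walk visits a point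
  \<open>(n, q n + 1)\<close> iff the height \<open>y - q x\<close> of the walk above the line \<open>y = q x\<close> reaches 1;
  this height is a one-dimensional walk with steps \<open>+1\<close> (probability \<open>pp\<close>) and \<open>-q\<close>.
  Since it moves up by at most 1, reaching height \<open>\<ge> 1\<close> is the same as hitting 1.

  For \<open>q \<le> \<beta>\<close> (recurrence) the limits \<open>H s = hit_prob_lim pp q s\<close> satisfy
  \<open>H s * H 0 \<le> H (s - 1)\<close> (to climb from \<open>s - 1\<close> one may first climb to \<open>s\<close> and
  then one more level), hence
  \<open>H 0 = pp + (1-pp) H (-q) \<ge> pp + (1-pp) H 0^(q+1)\<close>, and Bernoulli's inequality shows
  that \<open>r = 1\<close> is the only solution of this inequality in \<open>[0,1]\<close>.

  For \<open>q > \<beta>\<close> (transience) we find \<open>l > 1\<close> with \<open>pp l + (1-pp) l^-q \<le> 1\<close>, so that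
  \<open>l^height\<close> is a supermartingale; this gives \<open>hit_prob pp q N s \<le> l^-(1-s)\<close> and in
  particular \<open>\<Phi>\<^sub>\<beta>(q,0) \<le> 1/l < 1\<close>.
\<close>

section \<open>Reduction to a one-dimensional walk\<close>

definition step_val :: "nat \<Rightarrow> bool \<Rightarrow> int" where
  "step_val q b = (if b then 1 else - int q)"

definition walk_height :: "nat \<Rightarrow> bool stream \<Rightarrow> nat \<Rightarrow> int" where
  "walk_height q \<omega> k = int (length (filter id (stake k \<omega>))) - int q * int (length (filter Not (stake k \<omega>)))"

lemma walk_height_0 [simp]: "walk_height q \<omega> 0 = 0"
  by (simp add: walk_height_def)

lemma walk_height_Suc: "walk_height q \<omega> (Suc k) = step_val q (shd \<omega>) + walk_height q (stl \<omega>) k"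
  by (cases "shd \<omega>") (simp_all add: walk_height_def step_val_def algebra_simps)

lemma walk_height_Suc_le: "walk_height q \<omega> (Suc k) \<le> walk_height q \<omega> k + 1"
  unfolding walk_height_def stake_Suc by (cases "\<omega> !! k") (simp_all add: algebra_simps)

lemma first_passage_exact:
  fixes f :: "nat \<Rightarrow> int"
  assumes "f 0 \<le> 0" and "\<And>k. f (Suc k) \<le> f k + 1" and "f k \<ge> 1"
  shows "\<exists>j\<le>k. f j = 1"
  using assms(3)
proof (induction k)
  case 0
  with assms(1) show ?case by simp
next
  case (Suc k)
  show ?case
  proof (cases "f k \<ge> 1")
    case True
    with Suc.IH show ?thesis using le_SucI by blast
  next
    case False
    with assms(2)[of k] Suc.prems have "f (Suc k) = 1" by linarith
    then show ?thesis by blast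
  qed
qed

fun hits_within :: "nat \<Rightarrow> nat \<Rightarrow> int \<Rightarrow> bool stream \<Rightarrow> bool" where
  "hits_within q 0 s \<omega> = (s \<ge> 1)"
| "hits_within q (Suc N) s \<omega> = (s \<ge> 1 \<or> hits_within q N (s + step_val q (shd \<omega>)) (stl \<omega>))"

lemma hits_within_iff: "hits_within q N s \<omega> \<longleftrightarrow> (\<exists>k\<le>N. s + walk_height q \<omega> k \<ge> 1)"
proof (induction N arbitrary: s \<omega>)
  case 0
  then show ?case by simp
next
  case (Suc N)
  have "(\<exists>k\<le>Suc N. s + walk_height q \<omega> k \<ge> 1) \<longleftrightarrow> s \<ge> 1 \<or> (\<exists>k\<le>N. s + walk_height q \<omega> (Suc k) \<ge> 1)"
    by (metis walk_height_0 add.right_neutral Suc_le_mono not0_implies_Suc zero_le)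
  then show ?case using Suc by (simp add: walk_height_Suc add.assoc)
qed

lemma hits_within_Suc: "hits_within q N s \<omega> \<Longrightarrow> hits_within q (Suc N) s \<omega>"
  unfolding hits_within_iff using le_SucI by blast

lemma crossing_iff_hits_within:
  "(\<exists>k n::nat. walk_pos \<omega> k = (int n, int q * int n + 1)) \<longleftrightarrow> (\<exists>N. hits_within q N 0 \<omega>)"
proof -
  have "(\<exists>k n::nat. walk_pos \<omega> k = (int n, int q * int n + 1)) \<longleftrightarrow> (\<exists>k. walk_height q \<omega> k = 1)"
  proof
    assume "\<exists>k. walk_height q \<omega> k = 1"
    then obtain k where "walk_height q \<omega> k = 1" by blast
    then have "walk_pos \<omega> k = (int (length (filter Not (stake k \<omega>))),
                 int q * int (length (filter Not (stake k \<omega>))) + 1)"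
      by (auto simp: walk_pos_def walk_height_def)
    then show "\<exists>k n::nat. walk_pos \<omega> k = (int n, int q * int n + 1)" by blast
  next
    assume "\<exists>k n::nat. walk_pos \<omega> k = (int n, int q * int n + 1)"
    then obtain k n where "walk_pos \<omega> k = (int n, int q * int n + 1)" by blast
    then have "walk_height q \<omega> k = 1" by (auto simp: walk_pos_def walk_height_def)
    then show "\<exists>k. walk_height q \<omega> k = 1" by blast
  qed
  also have "\<dots> \<longleftrightarrow> (\<exists>k. walk_height q \<omega> k \<ge> 1)"
  proof
    assume "\<exists>k. walk_height q \<omega> k \<ge> 1"
    then obtain k where "walk_height q \<omega> k \<ge> 1" by blast
    from first_passage_exact[OF _ walk_height_Suc_le this]
    show "\<exists>k. walk_height q \<omega> k = 1" by auto
  qed (metis order_refl)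
  also have "\<dots> \<longleftrightarrow> (\<exists>N. hits_within q N 0 \<omega>)"
    by (auto simp: hits_within_iff)
  finally show ?thesis .
qed

section \<open>Finite-horizon hitting probabilities\<close>

text \<open>First-step recursion for the probability of \<open>hits_within q N s\<close>, where \<open>pp\<close> is the
  probability of an upward step.\<close>
fun hit_prob :: "real \<Rightarrow> nat \<Rightarrow> nat \<Rightarrow> int \<Rightarrow> real" where
  "hit_prob pp q 0 s = (if s \<ge> 1 then 1 else 0)"
| "hit_prob pp q (Suc N) s =
     (if s \<ge> 1 then 1 else pp * hit_prob pp q N (s + 1) + (1 - pp) * hit_prob pp q N (s - int q))"

lemma hit_prob_ge1: "s \<ge> 1 \<Longrightarrow> hit_prob pp q N s = 1"
  by (cases N) auto

lemma hit_prob_bounds: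
  assumes "0 \<le> pp" "pp \<le> 1"
  shows "0 \<le> hit_prob pp q N s \<and> hit_prob pp q N s \<le> 1"
proof (induction N arbitrary: s)
  case 0
  show ?case by simp
next
  case (Suc N)
  let ?a = "hit_prob pp q N (s + 1)" and ?b = "hit_prob pp q N (s - int q)"
  have "pp * ?a + (1 - pp) * ?b \<le> pp * 1 + (1 - pp) * 1"
    using Suc assms by (intro add_mono mult_left_mono) auto
  moreover have "0 \<le> pp * ?a + (1 - pp) * ?b" using Suc assms by simp
  ultimately show ?case by auto
qed

lemma hits_within_measurable:
  "Measurable.pred (stream_space (measure_pmf P)) (hits_within q N s)"
proof (induction N arbitrary: s)
  case 0
  show ?case by simp
next
  case (Suc N)
  have eq: "hits_within q (Suc N) s = (\<lambda>\<omega>. s \<ge> 1 \<or> (shd \<omega> \<and> hits_within q N (s + 1) (stl \<omega>))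
                                         \<or> (\<not> shd \<omega> \<and> hits_within q N (s - int q) (stl \<omega>)))"
    by (auto simp: step_val_def fun_eq_iff)
  note Suc[measurable]
  have [measurable]: "Measurable.pred (stream_space (measure_pmf P)) shd"
    using measurable_shd[of "measure_pmf P"] by (simp add: measurable_def)
  show ?case unfolding eq by measurable
qed

lemma hits_within_sets: "{\<omega>. hits_within q N s \<omega>} \<in> sets (stream_space (measure_pmf P))"
  using hits_within_measurable[where P=P and q=q and N=N and s=s]
  by (simp add: pred_def space_stream_space)

text \<open>The recursion computes the probability of the finite-horizon event: by the product
  structure of the stream space the first step is independent of the rest of the walk.\<close>
lemma emeasure_hits_within:
  assumes "0 \<le> pp" "pp \<le> 1"
  shows "emeasure (stream_space (measure_pmf (bernoulli_pmf pp))) {\<omega>. hits_within q N s \<omega>}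
           = ennreal (hit_prob pp q N s)"
proof -
  let ?M = "measure_pmf (bernoulli_pmf pp)"
  let ?S = "stream_space ?M"
  interpret S: prob_space ?S
    by (rule prob_space.prob_space_stream_space) (rule prob_space_measure_pmf)
  have space: "space ?S = UNIV" by (simp add: space_stream_space)
  show ?thesis
  proof (induction N arbitrary: s)
    case 0
    show ?case using S.emeasure_space_1 space by (cases "s \<ge> 1") auto
  next
    case (Suc N)
    show ?case
    proof (cases "s \<ge> 1")
      case True
      then show ?thesis using S.emeasure_space_1 space by simp
    next
      case False
      have "emeasure ?S {\<omega>. hits_within q (Suc N) s \<omega>}
            = (\<integral>\<^sup>+t. emeasure ?S {x \<in> space ?S. t ## x \<in> {\<omega>. hits_within q (Suc N) s \<omega>}} \<partial>?M)"
        by (rule prob_space.emeasure_stream_space[OF prob_space_measure_pmf hits_within_sets])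
      also have "\<dots> = (\<integral>\<^sup>+t. ennreal (hit_prob pp q N (s + step_val q t)) \<partial>?M)"
        using False by (simp add: space Suc)
      also have "\<dots> = ennreal (hit_prob pp q N (s + 1)) * ennreal pp
                     + ennreal (hit_prob pp q N (s - int q)) * ennreal (1 - pp)"
        using assms by (simp add: step_val_def)
      also have "\<dots> = ennreal (hit_prob pp q (Suc N) s)"
        using False hit_prob_bounds[OF assms] assms
        by (simp add: ennreal_plus ennreal_mult'' mult.commute)
      finally show ?thesis .
    qed
  qed
qed

text \<open>\<open>\<Phi>\<^sub>\<beta>(q,0)\<close> is the limit of the finite-horizon probabilities (continuity of the
  measure along the increasing union of \<open>crossing_iff_hits_within\<close>).\<close>
lemma Phi_limit:
  assumes "\<beta> > 0"
  shows "(\<lambda>N. hit_prob (\<beta> / (\<beta> + 1)) q N 0) \<longlonglongrightarrow> Phi \<beta> q"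
proof -
  define pp where "pp = \<beta> / (\<beta> + 1)"
  have pp: "0 \<le> pp" "pp \<le> 1" using assms by (auto simp: pp_def)
  let ?S = "stream_space (measure_pmf (bernoulli_pmf pp))"
  interpret S: prob_space ?S
    by (rule prob_space.prob_space_stream_space) (rule prob_space_measure_pmf)
  define A where "A N = {\<omega>. hits_within q N 0 \<omega>}" for N
  have event: "{\<omega> \<in> space (walk_space \<beta>). \<exists>k n::nat. walk_pos \<omega> k = (int n, int q * int n + 1)}
                 = (\<Union>N. A N)"
    by (auto simp: walk_space_def pp_def space_stream_space A_def crossing_iff_hits_within)
  have "range A \<subseteq> sets ?S" by (auto simp: A_def hits_within_sets)
  moreover have "incseq A"
    by (rule incseq_SucI) (auto simp: A_def intro: hits_within_Suc simp del: hits_within.simps)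
  ultimately have "(\<lambda>N. measure ?S (A N)) \<longlonglongrightarrow> measure ?S (\<Union>N. A N)"
    by (rule S.finite_Lim_measure_incseq)
  moreover have "measure ?S (A N) = hit_prob pp q N 0" for N
    using emeasure_hits_within[OF pp, of q N 0] hit_prob_bounds[OF pp, of q N 0]
    by (simp add: A_def measure_def)
  ultimately show ?thesis unfolding Phi_def event by (simp add: walk_space_def pp_def)
qed

section \<open>Recurrence for \<open>q \<le> \<beta>\<close>\<close>

lemma hit_prob_mono_Suc:
  assumes "0 \<le> pp" "pp \<le> 1"
  shows "hit_prob pp q N s \<le> hit_prob pp q (Suc N) s"
proof (induction N arbitrary: s)
  case 0
  show ?case using hit_prob_bounds[OF assms, of q "Suc 0" s] by auto
next
  case (Suc N)
  show ?case
  proof (cases "1 \<le> s")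
    case True
    then show ?thesis by (simp add: hit_prob_ge1)
  next
    case False
    have step: "hit_prob pp q (Suc M) s
                = pp * hit_prob pp q M (s + 1) + (1 - pp) * hit_prob pp q M (s - int q)" for M
      by (subst hit_prob.simps(2)) (simp only: if_not_P[OF False])
    have "pp * hit_prob pp q N (s + 1) + (1 - pp) * hit_prob pp q N (s - int q)
          \<le> pp * hit_prob pp q (Suc N) (s + 1) + (1 - pp) * hit_prob pp q (Suc N) (s - int q)"
      by (intro add_mono mult_left_mono Suc.IH) (use assms in auto)
    then show ?thesis unfolding step .
  qed
qed

lemma hit_prob_mono:
  assumes "0 \<le> pp" "pp \<le> 1" and "N \<le> M"
  shows "hit_prob pp q N s \<le> hit_prob pp q M s"
  using assms(3)
proof (induction rule: dec_induct)
  case (step n)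
  then show ?case using hit_prob_mono_Suc[OF assms(1,2), of q n s] by linarith
qed simp

text \<open>Climbing from \<open>s - 1\<close> to \<open>1\<close> within \<open>N + M\<close> steps is at least as likely as climbing
  from \<open>s\<close> to \<open>1\<close> within \<open>N\<close> steps and then one further level within \<open>M\<close> steps.\<close>
lemma hit_prob_supermult:
  assumes "0 \<le> pp" "pp \<le> 1"
  shows "hit_prob pp q N s * hit_prob pp q M 0 \<le> hit_prob pp q (N + M) (s - 1)"
proof -
  have started: "hit_prob pp q N s * hit_prob pp q M 0 \<le> hit_prob pp q (N + M) (s - 1)"
    if "1 \<le> s" for N s
  proof (cases "s = 1")
    case True
    then show ?thesis using hit_prob_mono[OF assms, of M "N + M" q 0] by (simp add: hit_prob_ge1)
  next
    case False
    then show ?thesis using that hit_prob_bounds[OF assms, of q M 0] by (simp add: hit_prob_ge1)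
  qed
  show ?thesis
  proof (induction N arbitrary: s)
    case 0
    show ?case using started[of s 0] hit_prob_bounds[OF assms, of q M "s - 1"]
      by (cases "1 \<le> s") simp_all
  next
    case (Suc N)
    show ?case
    proof (cases "1 \<le> s")
      case True
      then show ?thesis by (rule started)
    next
      case False
      let ?h = "hit_prob pp q M 0"
      have up: "hit_prob pp q N (s + 1) * ?h \<le> hit_prob pp q (N + M) s"
        using Suc.IH[of "s + 1"] by simp
      have down: "hit_prob pp q N (s - int q) * ?h \<le> hit_prob pp q (N + M) (s - 1 - int q)"
        using Suc.IH[of "s - int q"] by (simp add: algebra_simps)
      have "hit_prob pp q (Suc N) s * ?h
            = pp * (hit_prob pp q N (s + 1) * ?h) + (1 - pp) * (hit_prob pp q N (s - int q) * ?h)"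
        using False by (simp add: algebra_simps)
      also have "\<dots> \<le> pp * hit_prob pp q (N + M) s + (1 - pp) * hit_prob pp q (N + M) (s - 1 - int q)"
        using up down assms by (intro add_mono mult_left_mono) auto
      also have "\<dots> = hit_prob pp q (Suc N + M) (s - 1)"
        using False by simp
      finally show ?thesis .
    qed
  qed
qed

definition hit_prob_lim :: "real \<Rightarrow> nat \<Rightarrow> int \<Rightarrow> real" where
  "hit_prob_lim pp q s = (SUP N. hit_prob pp q N s)"

lemma hit_prob_lim:
  assumes "0 \<le> pp" "pp \<le> 1"
  shows "(\<lambda>N. hit_prob pp q N s) \<longlonglongrightarrow> hit_prob_lim pp q s"
  unfolding hit_prob_lim_def
proof (rule LIMSEQ_incseq_SUP)
  show "bdd_above (range (\<lambda>N. hit_prob pp q N s))"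
    using hit_prob_bounds[OF assms] by (intro bdd_aboveI[of _ 1]) auto
  show "incseq (\<lambda>N. hit_prob pp q N s)"
    by (rule incseq_SucI) (rule hit_prob_mono_Suc[OF assms])
qed

lemma hit_prob_le_lim:
  assumes "0 \<le> pp" "pp \<le> 1"
  shows "hit_prob pp q N s \<le> hit_prob_lim pp q s"
proof -
  have "incseq (\<lambda>N. hit_prob pp q N s)"
    by (rule incseq_SucI) (rule hit_prob_mono_Suc[OF assms])
  then show ?thesis using hit_prob_lim[OF assms] by (rule incseq_le)
qed

lemma hit_prob_lim_bounds:
  assumes "0 \<le> pp" "pp \<le> 1"
  shows "0 \<le> hit_prob_lim pp q s \<and> hit_prob_lim pp q s \<le> 1"
proof
  show "0 \<le> hit_prob_lim pp q s"
    using hit_prob_le_lim[OF assms, of q 0 s] hit_prob_bounds[OF assms, of q 0 s] by linarith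
  show "hit_prob_lim pp q s \<le> 1"
    by (rule LIMSEQ_le_const2[OF hit_prob_lim[OF assms]]) (use hit_prob_bounds[OF assms] in auto)
qed

lemma hit_prob_lim_supermult:
  assumes "0 \<le> pp" "pp \<le> 1"
  shows "hit_prob_lim pp q s * hit_prob_lim pp q 0 \<le> hit_prob_lim pp q (s - 1)"
proof (rule LIMSEQ_le_const2)
  show "(\<lambda>N. hit_prob pp q N s * hit_prob pp q N 0) \<longlonglongrightarrow> hit_prob_lim pp q s * hit_prob_lim pp q 0"
    by (intro tendsto_mult hit_prob_lim[OF assms])
  show "\<exists>N. \<forall>n\<ge>N. hit_prob pp q n s * hit_prob pp q n 0 \<le> hit_prob_lim pp q (s - 1)"
    using hit_prob_supermult[OF assms, of q _ s] hit_prob_le_lim[OF assms] order_trans by blast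
qed

lemma hit_prob_lim_origin:
  assumes "0 \<le> pp" "pp \<le> 1"
  shows "hit_prob_lim pp q 0 = pp + (1 - pp) * hit_prob_lim pp q (- int q)"
proof (rule LIMSEQ_unique)
  show "(\<lambda>N. hit_prob pp q (Suc N) 0) \<longlonglongrightarrow> hit_prob_lim pp q 0"
    using hit_prob_lim[OF assms] by (rule LIMSEQ_Suc)
  have "hit_prob pp q (Suc N) 0 = pp + (1 - pp) * hit_prob pp q N (- int q)" for N
    using hit_prob_ge1[of 1 pp q N] by simp
  then show "(\<lambda>N. hit_prob pp q (Suc N) 0) \<longlonglongrightarrow> pp + (1 - pp) * hit_prob_lim pp q (- int q)"
    by (simp only:) (intro tendsto_intros hit_prob_lim[OF assms])
qed

lemma hit_prob_lim_power:
  assumes "0 \<le> pp" "pp \<le> 1"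
  shows "hit_prob_lim pp q 0 ^ (k + 1) \<le> hit_prob_lim pp q (- int k)"
proof (induction k)
  case (Suc k)
  let ?H = "hit_prob_lim pp q"
  have "?H 0 ^ (Suc k + 1) = ?H 0 ^ (k + 1) * ?H 0" by simp
  also have "\<dots> \<le> ?H (- int k) * ?H 0"
    using Suc hit_prob_lim_bounds[OF assms] by (intro mult_right_mono) auto
  also have "\<dots> \<le> ?H (- int k - 1)" by (rule hit_prob_lim_supermult[OF assms])
  also have "- int k - 1 = - int (Suc k)" by simp
  finally show ?case .
qed simp

text \<open>For \<open>q \<le> \<beta>\<close>, \<open>r = 1\<close> is the only point of \<open>[0,1]\<close> with
  \<open>r \<ge> pp + (1-pp) r^(q+1)\<close>: otherwise Bernoulli's inequality would give \<open>\<beta> \<le> q r < \<beta>\<close>.\<close>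
lemma fixed_point_eq_one:
  fixes \<beta> r :: real
  assumes "\<beta> > 0" and "real q \<le> \<beta>" and "0 \<le> r" "r \<le> 1"
    and fixed: "r \<ge> \<beta> / (\<beta> + 1) + (1 - \<beta> / (\<beta> + 1)) * r ^ (q + 1)"
  shows "r = 1"
proof (rule ccontr)
  assume "r \<noteq> 1"
  then have "r < 1" using assms(4) by simp
  have up_prob: "1 - \<beta> / (\<beta> + 1) = 1 / (\<beta> + 1)" using \<open>\<beta> > 0\<close> by (simp add: field_simps)
  have "(\<beta> + 1) * r \<ge> (\<beta> + 1) * (\<beta> / (\<beta> + 1) + 1 / (\<beta> + 1) * r ^ (q + 1))"
    using fixed \<open>\<beta> > 0\<close> unfolding up_prob by (intro mult_left_mono) auto
  also have "(\<beta> + 1) * (\<beta> / (\<beta> + 1) + 1 / (\<beta> + 1) * r ^ (q + 1)) = \<beta> + r ^ (q + 1)"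
    using \<open>\<beta> > 0\<close> by (simp add: distrib_left add_pos_pos[THEN less_imp_neq, symmetric])
  finally have "(\<beta> + 1) * r \<ge> \<beta> + r ^ (q + 1)" .
  moreover have "r ^ (q + 1) \<ge> r + real q * r * (r - 1)"
  proof -
    have "r * (1 + real q * (r - 1)) \<le> r * r ^ q"
      using Bernoulli_inequality[of "r - 1" q] \<open>0 \<le> r\<close> by (intro mult_left_mono) auto
    then show ?thesis by (simp add: algebra_simps)
  qed
  ultimately have "(\<beta> - real q * r) * (r - 1) \<ge> 0" by (simp add: algebra_simps)
  then have "\<beta> \<le> real q * r" using \<open>r < 1\<close> by (simp add: zero_le_mult_iff)
  moreover have "real q * r < \<beta>"
  proof (cases "q = 0")
    case True
    then show ?thesis using \<open>\<beta> > 0\<close> by simp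
  next
    case False
    then have "real q * r < real q" using mult_strict_left_mono[of r 1 "real q"] \<open>r < 1\<close> by simp
    then show ?thesis using assms(2) by simp
  qed
  ultimately show False by simp
qed

lemma Phi_eq_1:
  assumes "\<beta> > 0" and "real q \<le> \<beta>"
  shows "Phi \<beta> q = 1"
proof -
  define pp where "pp = \<beta> / (\<beta> + 1)"
  have pp: "0 \<le> pp" "pp \<le> 1" using assms by (auto simp: pp_def)
  let ?H = "hit_prob_lim pp q"
  have Phi: "Phi \<beta> q = ?H 0"
    using LIMSEQ_unique[OF Phi_limit[OF assms(1)] hit_prob_lim[OF pp, unfolded pp_def]]
    by (simp add: pp_def)
  have "?H 0 \<ge> pp + (1 - pp) * ?H 0 ^ (q + 1)"
    using hit_prob_lim_origin[OF pp, of q] hit_prob_lim_power[OF pp, of q q] pp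
    by (simp add: mult_left_mono)
  then have "?H 0 = 1"
    using fixed_point_eq_one[OF assms] hit_prob_lim_bounds[OF pp] by (simp add: pp_def)
  with Phi show ?thesis by simp
qed

section \<open>Transience for \<open>q > \<beta>\<close>\<close>

text \<open>If \<open>l \<ge> 1\<close> and \<open>l^height\<close> is a supermartingale, i.e. \<open>pp l + (1-pp) l^-q \<le> 1\<close>, then
  the probability of climbing from \<open>s \<le> 1\<close> to \<open>1\<close> is at most \<open>l^-(1-s)\<close>.\<close>
lemma hit_prob_exp_bound:
  assumes "0 \<le> pp" "pp \<le> 1" "(l::real) \<ge> 1" and super: "pp * l + (1 - pp) / l ^ q \<le> 1"
    and "s \<le> 1"
  shows "hit_prob pp q N s * l ^ nat (1 - s) \<le> 1"
  using \<open>s \<le> 1\<close>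
proof (induction N arbitrary: s)
  case 0
  then show ?case by auto
next
  case (Suc N)
  show ?case
  proof (cases "s = 1")
    case True
    then show ?thesis by (simp add: hit_prob_ge1)
  next
    case False
    then have "s \<le> 0" using Suc.prems by auto
    define m where "m = nat (1 - s)"
    have "nat (1 - (s + 1)) = m - 1" and "nat (1 - (s - int q)) = m + q" and "m \<ge> 1"
      using \<open>s \<le> 0\<close> by (simp_all add: m_def)
    then have up: "hit_prob pp q N (s + 1) * l ^ (m - 1) \<le> 1"
      and down: "hit_prob pp q N (s - int q) * l ^ (m + q) \<le> 1"
      using Suc.IH[of "s + 1"] Suc.IH[of "s - int q"] \<open>s \<le> 0\<close> by simp_all
    have "l ^ m = l ^ (m - 1) * l" using \<open>m \<ge> 1\<close> by (simp add: power_eq_if)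
    then have up': "hit_prob pp q N (s + 1) * l ^ m \<le> l"
      using mult_right_mono[OF up, of l] assms(3) by (simp add: mult.assoc)
    have down': "hit_prob pp q N (s - int q) * l ^ m \<le> 1 / l ^ q"
      using down assms(3) by (simp add: power_add field_simps)
    have "hit_prob pp q (Suc N) s * l ^ nat (1 - s)
          = pp * (hit_prob pp q N (s + 1) * l ^ m) + (1 - pp) * (hit_prob pp q N (s - int q) * l ^ m)"
      using \<open>s \<le> 0\<close> by (simp add: m_def algebra_simps)
    also have "\<dots> \<le> pp * l + (1 - pp) * (1 / l ^ q)"
      using up' down' assms by (intro add_mono mult_left_mono) auto
    also have "\<dots> \<le> 1" using super by simp
    finally show ?thesis .
  qed
qed

text \<open>For \<open>q > \<beta>\<close> the base \<open>l = 1 + t\<close>, \<open>t = (q - \<beta>)/(q \<beta>)\<close>, makes \<open>l^height\<close> a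
  supermartingale; this uses \<open>l^q \<ge> 1 + q t = 1/(1 - \<beta> t)\<close> (Bernoulli).\<close>
lemma supermartingale_base_exists:
  assumes "\<beta> > 0" and "real q > \<beta>"
  shows "\<exists>l>1. \<beta> / (\<beta> + 1) * l + (1 - \<beta> / (\<beta> + 1)) / l ^ q \<le> 1"
proof -
  have "real q > 0" using assms by linarith
  define t where "t = (q - \<beta>) / (q * \<beta>)"
  have "t > 0" using assms \<open>real q > 0\<close> by (simp add: t_def)
  have inverse: "(1 - \<beta> * t) * (1 + real q * t) = 1"
    using assms \<open>real q > 0\<close> by (simp add: t_def field_simps)
  have "1 + real q * t > 0" using \<open>t > 0\<close> \<open>real q > 0\<close> by (simp add: add_pos_pos)
  have "1 / (1 + t) ^ q \<le> 1 / (1 + real q * t)"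
    using Bernoulli_inequality[of t q] \<open>t > 0\<close> \<open>1 + real q * t > 0\<close> by (intro divide_left_mono) auto
  also have "\<dots> = 1 - \<beta> * t" using inverse \<open>1 + real q * t > 0\<close> by (simp add: field_simps)
  finally have bound: "1 / (1 + t) ^ q \<le> 1 - \<beta> * t" .
  have "1 - \<beta> / (\<beta> + 1) = 1 / (\<beta> + 1)" using assms(1) by (simp add: field_simps)
  then have "\<beta> / (\<beta> + 1) * (1 + t) + (1 - \<beta> / (\<beta> + 1)) / (1 + t) ^ q
        = (\<beta> * (1 + t) + 1 / (1 + t) ^ q) / (\<beta> + 1)"
    by (simp add: add_divide_distrib)
  also have "\<dots> \<le> (\<beta> * (1 + t) + (1 - \<beta> * t)) / (\<beta> + 1)"
    using bound assms(1) by (intro divide_right_mono) auto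
  also have "\<dots> = 1" using assms(1) by (simp add: algebra_simps)
  finally show ?thesis using \<open>t > 0\<close> by (intro exI[of _ "1 + t"]) simp
qed

lemma Phi_less_1:
  assumes "\<beta> > 0" and "real q > \<beta>"
  shows "Phi \<beta> q < 1"
proof -
  define pp where "pp = \<beta> / (\<beta> + 1)"
  have pp: "0 \<le> pp" "pp \<le> 1" using assms by (auto simp: pp_def)
  obtain l where "l > 1" and super: "pp * l + (1 - pp) / l ^ q \<le> 1"
    using supermartingale_base_exists[OF assms] unfolding pp_def by blast
  have "hit_prob pp q N 0 \<le> 1 / l" for N
    using hit_prob_exp_bound[OF pp _ super, of 0 N] \<open>l > 1\<close> by (simp add: field_simps)
  then have "Phi \<beta> q \<le> 1 / l"
    by (intro LIMSEQ_le_const2[OF Phi_limit[OF assms(1)]]) (simp add: pp_def)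
  also have "\<dots> < 1" using \<open>l > 1\<close> by simp
  finally show ?thesis .
qed

theorem mainTheorem9:
  fixes \<beta> :: real and p :: nat
  assumes "\<beta> > 0" and "p = nat \<lfloor>\<beta>\<rfloor>"
  shows "Phi \<beta> p = 1 \<and> Phi \<beta> (p + 1) < 1"
proof -
  have "real p = of_int \<lfloor>\<beta>\<rfloor>" using assms by simp
  then have "real p \<le> \<beta>" and "real (p + 1) > \<beta>"
    using floor_correct[of \<beta>] by linarith+
  then show ?thesis using Phi_eq_1[OF assms(1)] Phi_less_1[OF assms(1)] by blast
qed

end
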